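(* Let $n\ge1$, $0<T_0<T_1<\dots<T_n$ with $T_i=T_{i-1}+P$ ($1\le i\le n$) for some $P>0$, let $0<B_{\mathrm{low}}<B_{\mathrm{up}}$, $F>0$, and let $C_i:=\mathbf{1}_{\{B_{\mathrm{low}}<S_u<B_{\mathrm{up}}\ \forall u\in[T_{i-1},T_i]\}}$ for $1\le i\le n$, $A:=\sum_{i=1}^nC_i$. Fix $t<T_0$ and write $\mathbb{P}_t,\mathbb{E}_t$ for (risk-neutral) probability and expectation conditional on $\mathcal{F}_t$. Then the time-$t$ price of the payoff $(F-A)^+$ paid at $T_n$ satisfies \[ e^{-r(T_n-t)}\mathbb{E}_t[(F-A)^+]=e^{-r(T_n-t)}\sum_{i=0}^{n\wedge\lfloor F\rfloor}(F-i)\,\mathbb{P}_t[A=i], \] where $\mathbb{P}_t[A=n]=\mathbb{P}_t[B_{\mathrm{low}}<S_u<B_{\mathrm{up}}\ \forall u\in[T_0,T_n]]$; the remaining point masses $\mathbb{P}_t[A=i]$, $0\le i\le n-1$, are determined by $\mathbb{P}_t[A=n]$ and the moments $\mathbb{E}_t[A^\nu]$, $0\le\nu<n$, through the linear system $\mathbb{E}_t[A^\nu]=\sum_{i=0}^n i^\nu\,\mathbb{P}_t[A=i]$; and for $1\le\nu<n$, \[ \mathbb{E}_t[A^\nu]=\sum_{J\subseteq\{1,\dots,n\}}c(\nu,J)\,\mathbb{P}_t\big[B_{\mathrm{low}}<S_u<B_{\mathrm{up}}\ \forall u\in\textstyle\bigcup_{j\in J}[T_{j-1},T_{j-1}+P]\big],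 \] with $c(\nu,J):=\sum_{0\le i_1,\dots,i_n\le\nu,\ \mathrm{supp}(\mathbf{i})=J}\binom{\nu}{i_1,\dots,i_n}$.
   Context: Black–Scholes model under the pricing measure: $dS_t/S_t=r\,dt+\sigma\,dW_t$, $r>0$, $\sigma>0$, $W$ a standard Brownian motion with filtration $(\mathcal{F}_t)$. For $\mathbf{i}=(i_1,\dots,i_n)$, $\mathrm{supp}(\mathbf{i})$ is the set of indices $k$ with $i_k\neq0$, and $\binom{\nu}{i_1,\dots,i_n}$ is the multinomial coefficient (zero unless $i_1+\dots+i_n=\nu$). The conditional probabilities appearing are the undiscounted prices (i.e. $e^{r(\cdot)}$ times the discounted prices) of multi-period double barrier digitals. *)

theory Defs
  imports "HOL-Probability.Probability"
begin

definition std_BM :: "'a measure \<Rightarrow> (real \<Rightarrow> 'a measure) \<Rightarrow> (real \<Rightarrow> 'a \<Rightarrow> real) \<Rightarrow> bool" where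
  "std_BM M F W \<longleftrightarrow>
     prob_space M \<and>
     (\<forall>s. subalgebra M (F s)) \<and>
     (\<forall>s u. s \<le> u \<longrightarrow> sets (F s) \<subseteq> sets (F u)) \<and>
     (\<forall>s\<ge>0. W s \<in> borel_measurable (F s)) \<and>
     (\<forall>\<omega>\<in>space M. W 0 \<omega> = 0 \<and> continuous_on {0..} (\<lambda>u. W u \<omega>)) \<and>
     (\<forall>s u. 0 \<le> s \<and> s < u \<longrightarrow>
        distributed M lborel (\<lambda>\<omega>. W u \<omega> - W s \<omega>)
          (\<lambda>x. ennreal (normal_density 0 (sqrt (u - s)) x))) \<and>
     (\<forall>s u. 0 \<le> s \<and> s < u \<longrightarrow>
        (\<forall>A\<in>sets (F s). \<forall>B\<in>sets borel.
           measure M (A \<inter> ((\<lambda>\<omega>. W u \<omega> - W s \<omega>) -` B \<inter> space M))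
           = measure M A * measure M ((\<lambda>\<omega>. W u \<omega> - W s \<omega>) -` B \<inter> space M)))"

text \<open>Black--Scholes price path under the pricing measure:
  S_u = S_0 exp((r - \<sigma>^2/2) u + \<sigma> W_u), the solution of dS/S = r dt + \<sigma> dW.\<close>
definition bs_price :: "real \<Rightarrow> real \<Rightarrow> real \<Rightarrow> (real \<Rightarrow> 'a \<Rightarrow> real) \<Rightarrow> real \<Rightarrow> 'a \<Rightarrow> real" where
  "bs_price S0 r \<sigma> W u \<omega> = S0 * exp ((r - \<sigma>\<^sup>2 / 2) * u + \<sigma> * W u \<omega>)"

definition inside_event :: "'a measure \<Rightarrow> (real \<Rightarrow> 'a \<Rightarrow> real) \<Rightarrow> real \<Rightarrow> real \<Rightarrow> real set \<Rightarrow> 'a set" where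
  "inside_event M S Blow Bup I = {\<omega>\<in>space M. \<forall>u\<in>I. Blow < S u \<omega> \<and> S u \<omega> < Bup}"

abbreviation cexp :: "'a measure \<Rightarrow> 'a measure \<Rightarrow> ('a \<Rightarrow> real) \<Rightarrow> 'a \<Rightarrow> real" where
  "cexp M G f \<equiv> real_cond_exp M G f"

abbreviation cprob :: "'a measure \<Rightarrow> 'a measure \<Rightarrow> 'a set \<Rightarrow> 'a \<Rightarrow> real" where
  "cprob M G E \<equiv> real_cond_exp M G (indicator E)"

definition multinom :: "nat \<Rightarrow> nat \<Rightarrow> (nat \<Rightarrow> nat) \<Rightarrow> nat" where
  "multinom \<nu> n i = (if (\<Sum>k\<in>{1..n}. i k) = \<nu>
      then fact \<nu> div (\<Prod>k\<in>{1..n}. fact (i k)) else 0)"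

definition supp_idx :: "nat \<Rightarrow> (nat \<Rightarrow> nat) \<Rightarrow> nat set" where
  "supp_idx n i = {k\<in>{1..n}. i k \<noteq> 0}"

definition coef_c :: "nat \<Rightarrow> nat \<Rightarrow> nat set \<Rightarrow> nat" where
  "coef_c n \<nu> J = (\<Sum>i\<in>{i\<in>{1..n} \<rightarrow>\<^sub>E {0..\<nu>}. supp_idx n i = J}. multinom \<nu> n i)"

end

theory Submission
  imports Defs "HOL-Computational_Algebra.Polynomial"
begin

text \<open>The number A of monitoring periods in which the price stays inside the corridor takes
  only the values 0, ..., n, so every function of A is a finite linear combination of the
  indicators of the events {A = i}; linearity of conditional expectation then gives the put
  decomposition and the moment equations. The moments of order below n are a Vandermonde system in the remaining point
  masses, hence determine them. Finally, since the C_i take only the values 0 and 1, the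
  multinomial expansion of A^\<nu> collapses to products of C_j over index sets J, and such a
  product is the indicator of staying inside on the union of the corresponding periods.
  Continuity of the price paths makes all of these events measurable.\<close>

lemma fact_prod_dvd_fact_sum:
  assumes "finite K"
  shows "(\<Prod>k\<in>K. fact (i k) :: nat) dvd fact (\<Sum>k\<in>K. i k)"
  using assms
proof (induction K rule: finite_induct)
  case empty
  then show ?case by simp
next
  case (insert a K)
  have "(\<Prod>k\<in>insert a K. fact (i k) :: nat) = fact (i a) * (\<Prod>k\<in>K. fact (i k))"
    using insert by simp
  also have "\<dots> dvd fact (i a) * fact (\<Sum>k\<in>K. i k)"
    using insert.IH by (rule mult_dvd_mono[OF dvd_refl])
  also have "\<dots> dvd fact (i a + (\<Sum>k\<in>K. i k))"
    by (rule fact_fact_dvd_fact)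
  finally show ?case
    using insert by simp
qed

lemma multinomial_theorem:
  fixes x :: "'b \<Rightarrow> 'a::field_char_0"
  assumes "finite K"
  shows "(\<Sum>k\<in>K. x k) ^ \<nu> = (\<Sum>i\<in>{i\<in>K \<rightarrow>\<^sub>E {0..\<nu>}. sum i K = \<nu>}.
            fact \<nu> / (\<Prod>k\<in>K. fact (i k)) * (\<Prod>k\<in>K. x k ^ i k))"
  using assms
proof (induction K arbitrary: \<nu> rule: finite_induct)
  case empty
  have "{i\<in>{} \<rightarrow>\<^sub>E {0..\<nu>}. sum i {} = \<nu>} = (if \<nu> = 0 then {\<lambda>_. undefined} else {})"
    by auto
  then show ?case
    by (cases "\<nu> = 0") simp_all
next
  case (insert a K)
  define Sg where "Sg m = {i :: 'b \<Rightarrow> nat. i \<in> K \<rightarrow>\<^sub>E {0..m} \<and> sum i K = m}" for m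
  define g where "g p = of_nat (\<nu> choose fst p) * x a ^ fst p *
        (fact (\<nu> - fst p) / (\<Prod>k\<in>K. fact (snd p k)) * (\<Prod>k\<in>K. x k ^ snd p k))"
    for p :: "nat \<times> ('b \<Rightarrow> nat)"
  have finite_Sg: "finite (Sg m)" for m
    unfolding Sg_def
    by (rule finite_subset[of _ "K \<rightarrow>\<^sub>E {0..m}"]) (use insert(1) in \<open>auto intro: finite_PiE\<close>)
  have "(\<Sum>k\<in>insert a K. x k) ^ \<nu> = (\<Sum>j\<le>\<nu>. of_nat (\<nu> choose j) * x a ^ j * (\<Sum>k\<in>K. x k) ^ (\<nu> - j))"
    using insert by (simp add: binomial_ring)
  also have "\<dots> = (\<Sum>j\<le>\<nu>. \<Sum>i\<in>Sg (\<nu> - j). g (j, i))"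
    unfolding insert.IH Sg_def g_def by (simp add: sum_distrib_left)
  also have "\<dots> = (\<Sum>p\<in>Sigma {..\<nu>} (\<lambda>j. Sg (\<nu> - j)). g p)"
    by (subst sum.Sigma) (auto simp: finite_Sg split_def)
  also have "\<dots> = (\<Sum>f\<in>{i\<in>insert a K \<rightarrow>\<^sub>E {0..\<nu>}. sum i (insert a K) = \<nu>}.
                    fact \<nu> / (\<Prod>k\<in>insert a K. fact (f k)) * (\<Prod>k\<in>insert a K. x k ^ f k))"
  proof (rule sum.reindex_bij_witness[where j = "\<lambda>p. (snd p)(a := fst p)" and i = "\<lambda>f. (f a, restrict f K)"])
    fix p assume p: "p \<in> Sigma {..\<nu>} (\<lambda>j. Sg (\<nu> - j))"
    obtain j i where p_eq: "p = (j, i)" by (cases p)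
    have j: "j \<le> \<nu>" and i: "i \<in> K \<rightarrow>\<^sub>E {0..\<nu> - j}" "sum i K = \<nu> - j"
      using p p_eq unfolding Sg_def by auto
    have i_undefined: "i k = undefined" if "k \<notin> K" for k
      using i that by (auto simp: PiE_def extensional_def)
    show "(((snd p)(a := fst p)) a, restrict ((snd p)(a := fst p)) K) = p"
      using p_eq insert(2) by (auto simp: restrict_def fun_eq_iff i_undefined)
    have "sum (i(a := j)) K = sum i K"
      using insert(2) by (intro sum.cong) auto
    then show "(snd p)(a := fst p) \<in> {i\<in>insert a K \<rightarrow>\<^sub>E {0..\<nu>}. sum i (insert a K) = \<nu>}"
      using p_eq i j insert(1,2) by (auto simp: PiE_def extensional_def Pi_def)
    have "(\<Prod>k\<in>K. fact (if k = a then j else i k)) = (\<Prod>k\<in>K. (fact (i k) :: 'a))"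
      "(\<Prod>k\<in>K. x k ^ (if k = a then j else i k)) = (\<Prod>k\<in>K. x k ^ i k)"
      using insert(2) by (auto intro: prod.cong)
    then show "fact \<nu> / (\<Prod>k\<in>insert a K. fact (((snd p)(a := fst p)) k)) *
          (\<Prod>k\<in>insert a K. x k ^ ((snd p)(a := fst p)) k) = g p"
      using insert(1,2) j unfolding p_eq g_def
      by (simp add: binomial_fact field_simps)
  next
    fix f assume f: "f \<in> {i\<in>insert a K \<rightarrow>\<^sub>E {0..\<nu>}. sum i (insert a K) = \<nu>}"
    have sum_f: "f a + sum f K = \<nu>" and f_undefined: "\<And>k. k \<notin> insert a K \<Longrightarrow> f k = undefined"
      using f insert(1,2) by (auto simp: PiE_def extensional_def)
    have "f k \<le> sum f K" if "k \<in> K" for k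
      using insert(1) that by (intro member_le_sum) auto
    then show "(f a, restrict f K) \<in> Sigma {..\<nu>} (\<lambda>j. Sg (\<nu> - j))"
      unfolding Sg_def using sum_f by (auto simp: PiE_def)
    show "(snd (f a, restrict f K))(a := fst (f a, restrict f K)) = f"
      using f_undefined by (auto simp: fun_eq_iff restrict_def)
  qed
  finally show ?case .
qed

lemma power_sum_zero_one_coef_c:
  fixes x :: "nat \<Rightarrow> real"
  assumes zero_one: "\<forall>k\<in>{1..n}. x k = 0 \<or> x k = 1"
  shows "(\<Sum>k\<in>{1..n}. x k) ^ \<nu> = (\<Sum>J\<in>Pow {1..n}. real (coef_c n \<nu> J) * (\<Prod>k\<in>J. x k))"
proof -
  define I where "I = {1..n} \<rightarrow>\<^sub>E {0..\<nu>}"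
  have finite_I: "finite I"
    unfolding I_def by (auto intro: finite_PiE)
  have "(\<Sum>k\<in>{1..n}. x k) ^ \<nu> = (\<Sum>i\<in>{i\<in>I. sum i {1..n} = \<nu>}.
            fact \<nu> / (\<Prod>k\<in>{1..n}. fact (i k)) * (\<Prod>k\<in>{1..n}. x k ^ i k))"
    unfolding I_def by (rule multinomial_theorem) simp
  also have "\<dots> = (\<Sum>i\<in>I. real (multinom \<nu> n i) * (\<Prod>k\<in>supp_idx n i. x k))"
  proof (rule sum.mono_neutral_cong_left[OF finite_I])
    show "\<forall>i\<in>I - {i\<in>I. sum i {1..n} = \<nu>}. real (multinom \<nu> n i) * (\<Prod>k\<in>supp_idx n i. x k) = 0"
      unfolding multinom_def by auto
  next
    fix i assume i: "i \<in> {i\<in>I. sum i {1..n} = \<nu>}"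
    have "(\<Prod>k\<in>{1..n}. fact (i k) :: nat) dvd fact \<nu>"
      using fact_prod_dvd_fact_sum[of "{1..n}" i] i by simp
    then have "real (multinom \<nu> n i) = fact \<nu> / (\<Prod>k\<in>{1..n}. fact (i k))"
      using i unfolding multinom_def by (simp add: real_of_nat_div)
    moreover have "(\<Prod>k\<in>{1..n}. x k ^ i k) = (\<Prod>k\<in>supp_idx n i. x k ^ i k)"
      by (rule prod.mono_neutral_right) (auto simp: supp_idx_def)
    moreover have "\<dots> = (\<Prod>k\<in>supp_idx n i. x k)"
      using zero_one by (intro prod.cong) (force simp: supp_idx_def zero_power)+
    ultimately show "fact \<nu> / (\<Prod>k\<in>{1..n}. fact (i k)) * (\<Prod>k\<in>{1..n}. x k ^ i k) =
        real (multinom \<nu> n i) * (\<Prod>k\<in>supp_idx n i. x k)"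
      by simp
  qed auto
  also have "\<dots> = (\<Sum>J\<in>Pow {1..n}. \<Sum>i\<in>{i\<in>I. supp_idx n i = J}.
                     real (multinom \<nu> n i) * (\<Prod>k\<in>supp_idx n i. x k))"
    by (rule sum.group[symmetric, OF finite_I]) (auto simp: supp_idx_def)
  also have "\<dots> = (\<Sum>J\<in>Pow {1..n}. real (coef_c n \<nu> J) * (\<Prod>k\<in>J. x k))"
    unfolding coef_c_def I_def by (auto simp: sum_distrib_right intro!: sum.cong)
  finally show ?thesis .
qed

lemma vandermonde_kernel_trivial:
  fixes x d :: "nat \<Rightarrow> 'a::field"
  assumes inj: "inj_on x {..<n}" and kernel: "\<forall>\<nu><n. (\<Sum>i<n. x i ^ \<nu> * d i) = 0" and j: "j < n"
  shows "d j = 0"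
proof -
  \<comment> \<open>Test the vanishing moments against the Lagrange-type polynomial vanishing at every node but x j.\<close>
  define p where "p = (\<Prod>k\<in>{..<n} - {j}. [:- x k, 1:])"
  have "degree p \<le> card ({..<n} - {j})"
    unfolding p_def using degree_prod_sum_le[of "{..<n} - {j}" "\<lambda>k. [:- x k, 1:]"] by simp
  then have degree_p: "degree p < n"
    using j by simp
  have poly_p: "poly p y = (\<Sum>\<nu><n. coeff p \<nu> * y ^ \<nu>)" for y
    unfolding poly_altdef using degree_p
    by (intro sum.mono_neutral_left) (auto simp: coeff_eq_0)
  have poly_p_nodes: "poly p (x i) = (\<Prod>k\<in>{..<n} - {j}. x i - x k)" for i
    unfolding p_def by (simp add: poly_prod)
  have "0 = (\<Sum>\<nu><n. coeff p \<nu> * (\<Sum>i<n. x i ^ \<nu> * d i))"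
    using kernel by simp
  also have "\<dots> = (\<Sum>i<n. \<Sum>\<nu><n. coeff p \<nu> * (x i ^ \<nu> * d i))"
    unfolding sum_distrib_left by (rule sum.swap)
  also have "\<dots> = (\<Sum>i<n. d i * poly p (x i))"
    unfolding poly_p sum_distrib_left by (simp add: mult_ac)
  also have "\<dots> = d j * poly p (x j)"
  proof -
    have "(\<Sum>i\<in>{..<n} - {j}. d i * poly p (x i)) = 0"
      by (rule sum.neutral) (auto simp: poly_p_nodes)
    then show ?thesis
      using sum.remove[of "{..<n}" j "\<lambda>i. d i * poly p (x i)"] j by simp
  qed
  finally have "d j * poly p (x j) = 0" by simp
  moreover have "poly p (x j) \<noteq> 0"
    using inj j unfolding poly_p_nodes by (auto dest: inj_onD)
  ultimately show ?thesis by simp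
qed

lemma point_masses_unique_from_moments:
  fixes m p :: "nat \<Rightarrow> real"
  assumes p: "\<forall>\<nu><n. m \<nu> = (\<Sum>i\<in>{0..n}. real i ^ \<nu> * p i)"
  shows "\<forall>q. (\<forall>\<nu><n. m \<nu> = (\<Sum>i\<in>{0..<n}. real i ^ \<nu> * q i) + real n ^ \<nu> * p n)
           \<longrightarrow> (\<forall>i<n. q i = p i)"
proof (intro allI impI)
  fix q :: "nat \<Rightarrow> real" and i
  assume q: "\<forall>\<nu><n. m \<nu> = (\<Sum>i\<in>{0..<n}. real i ^ \<nu> * q i) + real n ^ \<nu> * p n" and i: "i < n"
  have "(\<Sum>i<n. real i ^ \<nu> * (q i - p i)) = 0" if "\<nu> < n" for \<nu>
    using p q that
    by (simp add: atLeast0AtMost atLeast0LessThan lessThan_Suc_atMost[symmetric]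
        right_diff_distrib sum_subtractf)
  then have "q i - p i = 0"
    by (intro vandermonde_kernel_trivial[of real n "\<lambda>i. q i - p i", OF _ _ i]) (auto simp: inj_on_def)
  then show "q i = p i" by simp
qed

lemma sum_put_payoff:
  fixes p :: "nat \<Rightarrow> real"
  assumes "0 \<le> K"
  shows "(\<Sum>k\<in>{0..n}. max (K - real k) 0 * p k) = (\<Sum>k\<in>{0..min n (nat \<lfloor>K\<rfloor>)}. (K - real k) * p k)"
proof (rule sum.mono_neutral_cong_right)
  have "K < real k" if "nat \<lfloor>K\<rfloor> < k" for k
    using le_nat_floor[of k K] that by linarith
  then show "\<forall>k\<in>{0..n} - {0..min n (nat \<lfloor>K\<rfloor>)}. max (K - real k) 0 * p k = 0"
    by force
  show "max (K - real k) 0 * p k = (K - real k) * p k" if "k \<in> {0..min n (nat \<lfloor>K\<rfloor>)}" for k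
  proof -
    have "real k \<le> real (nat \<lfloor>K\<rfloor>)"
      using that by simp
    also have "\<dots> \<le> K"
      using assms by (rule of_nat_floor)
    finally show ?thesis by simp
  qed
qed auto

lemma sum_indicator_eq_card_Collect:
  assumes "finite I"
  shows "(\<Sum>i\<in>I. indicator (E i) x :: real) = real (card {i\<in>I. x \<in> E i})"
  using assms by (simp add: indicator_def Int_def)

lemma Collect_sum_indicator_eq_card:
  assumes "finite I"
  shows "{x\<in>X. (\<Sum>i\<in>I. indicator (E i) x :: real) = real (card I)} = X \<inter> (\<Inter>i\<in>I. E i)"
proof -
  have "card {i\<in>I. x \<in> E i} = card I \<longleftrightarrow> {i\<in>I. x \<in> E i} = I" for x
    using assms card_subset_eq[of I "{i\<in>I. x \<in> E i}"] by auto
  then show ?thesis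
    using assms by (auto simp: sum_indicator_eq_card_Collect)
qed

lemma finite_measure_subalgebraI:
  assumes "prob_space M" and "subalgebra M G"
  shows "finite_measure_subalgebra M G"
  using assms by (simp add: finite_measure_subalgebra_def finite_measure_subalgebra_axioms_def
      prob_space.finite_measure)

context finite_measure_subalgebra
begin

lemma real_cond_exp_simple_function:
  assumes I: "finite I" and E: "\<And>i. i \<in> I \<Longrightarrow> E i \<in> sets M"
    and f: "\<And>x. x \<in> space M \<Longrightarrow> f x = (\<Sum>i\<in>I. c i * indicator (E i) x)"
  shows "AE x in M. real_cond_exp M F f x = (\<Sum>i\<in>I. c i * real_cond_exp M F (indicator (E i)) x)"
proof -
  \<comment> \<open>real_cond_exp_sum needs every summand integrable, also for indices outside I.\<close>
  define E' where "E' i = (if i \<in> I then E i else {})" for i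
  have E'_sets [measurable]: "E' i \<in> sets M" for i
    using E by (simp add: E'_def)
  have integrable_E': "integrable M (\<lambda>x. c i * indicator (E' i) x)" for i
    by (intro integrable_mult_right integrable_real_indicator) (simp_all add: less_top[symmetric])
  have f_E': "f x = (\<Sum>i\<in>I. c i * indicator (E' i) x)" if "x \<in> space M" for x
    using f[OF that] by (simp add: E'_def)
  have "AE x in M. real_cond_exp M F f x = real_cond_exp M F (\<lambda>x. \<Sum>i\<in>I. c i * indicator (E' i) x) x"
    using f_E' by (intro real_cond_exp_cong) (auto simp: measurable_cong[OF f_E'])
  moreover have "AE x in M. real_cond_exp M F (\<lambda>x. \<Sum>i\<in>I. c i * indicator (E' i) x) x
      = (\<Sum>i\<in>I. real_cond_exp M F (\<lambda>x. c i * indicator (E' i) x) x)"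
    using integrable_E' by (rule real_cond_exp_sum)
  moreover have "AE x in M. \<forall>i\<in>I. real_cond_exp M F (\<lambda>x. c i * indicator (E' i) x) x
      = c i * real_cond_exp M F (indicator (E i)) x"
    using I E by (intro AE_finite_allI real_cond_exp_cmult integrable_real_indicator)
      (auto simp: E'_def less_top[symmetric])
  ultimately show ?thesis
    by eventually_elim simp
qed

lemma real_cond_exp_nat_valued:
  assumes X: "X \<in> borel_measurable M" and X_values: "\<And>x. x \<in> space M \<Longrightarrow> \<exists>k\<le>n. X x = real k"
  shows "AE x in M. real_cond_exp M F (\<lambda>x. g (X x)) x
    = (\<Sum>k\<in>{0..n}. g (real k) * real_cond_exp M F (indicator {x\<in>space M. X x = real k}) x)"
proof (rule real_cond_exp_simple_function)
  fix x assume "x \<in> space M"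
  then obtain m where "m \<le> n" "X x = real m"
    using X_values by blast
  then show "g (X x) = (\<Sum>k\<in>{0..n}. g (real k) * indicator {x\<in>space M. X x = real k} x)"
    using \<open>x \<in> space M\<close> by (simp add: indicator_def if_distrib cong: if_cong)
qed (use X in auto)

lemma real_cond_exp_fun_count:
  assumes E: "\<And>i. i \<in> {1..n} \<Longrightarrow> E i \<in> sets M"
  shows "AE x in M. real_cond_exp M F (\<lambda>x. g (\<Sum>i\<in>{1..n}. indicator (E i) x)) x
    = (\<Sum>k\<in>{0..n}. g (real k) *
         real_cond_exp M F (indicator {x\<in>space M. (\<Sum>i\<in>{1..n}. indicator (E i) x) = real k}) x)"
proof (rule real_cond_exp_nat_valued)
  show "(\<lambda>x. \<Sum>i\<in>{1..n}. indicator (E i) x :: real) \<in> borel_measurable M"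
    using E by (intro borel_measurable_sum borel_measurable_indicator) auto
  have "card {i\<in>{1..n}. x \<in> E i} \<le> card {1..n}" for x
    by (rule card_mono) auto
  then show "\<exists>k\<le>n. (\<Sum>i\<in>{1..n}. indicator (E i) x) = real k" for x
    by (auto simp: sum_indicator_eq_card_Collect)
qed

lemma real_cond_exp_power_count:
  assumes E: "\<And>i. i \<in> {1..n} \<Longrightarrow> E i \<in> sets M"
  shows "AE x in M. real_cond_exp M F (\<lambda>x. (\<Sum>i\<in>{1..n}. indicator (E i) x) ^ \<nu>) x
    = (\<Sum>J\<in>Pow {1..n}. real (coef_c n \<nu> J) * real_cond_exp M F (indicator (space M \<inter> (\<Inter>j\<in>J. E j))) x)"
proof (rule real_cond_exp_simple_function)
  fix J assume J: "J \<in> Pow {1..n}"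
  show "space M \<inter> (\<Inter>j\<in>J. E j) \<in> sets M"
  proof (cases "J = {}")
    case False
    have "finite J"
      using J finite_subset by auto
    then have "(\<Inter>j\<in>J. E j) \<in> sets M"
      using False J E by (intro sets.finite_INT) auto
    then show ?thesis by auto
  qed simp
next
  fix x assume "x \<in> space M"
  have "(\<Sum>i\<in>{1..n}. indicator (E i) x) ^ \<nu>
      = (\<Sum>J\<in>Pow {1..n}. real (coef_c n \<nu> J) * (\<Prod>j\<in>J. indicator (E j) x))"
    by (rule power_sum_zero_one_coef_c) (simp add: indicator_def)
  also have "\<dots> = (\<Sum>J\<in>Pow {1..n}. real (coef_c n \<nu> J) * indicator (space M \<inter> (\<Inter>j\<in>J. E j)) x)"
    using \<open>x \<in> space M\<close>
    by (intro sum.cong) (auto simp: finite_subset indicator_def)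
  finally show "(\<Sum>i\<in>{1..n}. indicator (E i) x) ^ \<nu>
      = (\<Sum>J\<in>Pow {1..n}. real (coef_c n \<nu> J) * indicator (space M \<inter> (\<Inter>j\<in>J. E j)) x)" .
qed simp

end

lemma continuous_on_strict_bounds_iff_dense:
  fixes f :: "real \<Rightarrow> real"
  assumes I: "compact I" and f: "continuous_on I f" and D: "D \<subseteq> I" "I \<subseteq> closure D"
  shows "(\<forall>u\<in>I. lo < f u \<and> f u < hi)
    \<longleftrightarrow> (\<exists>k::nat. \<forall>q\<in>D. lo + inverse (Suc k) \<le> f q \<and> f q \<le> hi - inverse (Suc k))"
proof
  assume bounds: "\<forall>u\<in>I. lo < f u \<and> f u < hi"
  show "\<exists>k::nat. \<forall>q\<in>D. lo + inverse (Suc k) \<le> f q \<and> f q \<le> hi - inverse (Suc k)"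
  proof (cases "I = {}")
    case False
    \<comment> \<open>On the compact set I the continuous f keeps a positive distance from both bounds.\<close>
    obtain u1 where u1: "u1 \<in> I" "\<forall>u\<in>I. f u1 \<le> f u"
      using continuous_attains_inf[OF I False f] by blast
    obtain u2 where u2: "u2 \<in> I" "\<forall>u\<in>I. f u \<le> f u2"
      using continuous_attains_sup[OF I False f] by blast
    have "0 < min (f u1 - lo) (hi - f u2)"
      using bounds u1 u2 by auto
    then obtain k :: nat where "inverse (Suc k) < min (f u1 - lo) (hi - f u2)"
      using reals_Archimedean by blast
    then have k: "inverse (Suc k) < f u1 - lo" "inverse (Suc k) < hi - f u2"
      by simp_all
    have "lo + inverse (Suc k) \<le> f q \<and> f q \<le> hi - inverse (Suc k)" if "q \<in> D" for q
    proof -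
      have "f u1 \<le> f q" "f q \<le> f u2"
        using u1 u2 D that by auto
      then show ?thesis
        using k by linarith
    qed
    then show ?thesis by blast
  qed (use D in auto)
next
  assume "\<exists>k::nat. \<forall>q\<in>D. lo + inverse (Suc k) \<le> f q \<and> f q \<le> hi - inverse (Suc k)"
  then obtain e :: real where e: "e > 0" "\<forall>q\<in>D. lo + e \<le> f q \<and> f q \<le> hi - e"
    by (metis inverse_positive_iff_positive of_nat_0_less_iff zero_less_Suc)
  have "closed (I \<inter> f -` {lo + e..hi - e})"
    using f I by (intro continuous_closed_preimage) (auto intro: compact_imp_closed)
  then have "closure D \<subseteq> I \<inter> f -` {lo + e..hi - e}"
    using D e by (intro closure_minimal) auto
  then have "lo + e \<le> f u \<and> f u \<le> hi - e" if "u \<in> I" for u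
    using D(2) that by auto
  with e(1) show "\<forall>u\<in>I. lo < f u \<and> f u < hi"
    by fastforce
qed

lemma inside_event_measurable:
  assumes I: "compact I" and S_meas: "\<And>u. u \<in> I \<Longrightarrow> S u \<in> borel_measurable M"
    and S_cont: "\<And>\<omega>. \<omega> \<in> space M \<Longrightarrow> continuous_on I (\<lambda>u. S u \<omega>)"
  shows "inside_event M S lo hi I \<in> sets M"
proof -
  obtain D where D: "countable D" "D \<subseteq> I" "I \<subseteq> closure D"
    using separable by blast
  define G where "G k = space M \<inter> (\<Inter>q\<in>D. {\<omega>\<in>space M. lo + inverse (Suc k) \<le> S q \<omega> \<and> S q \<omega> \<le> hi - inverse (Suc k)})"
    for k :: nat
  have "inside_event M S lo hi I
      = {\<omega>\<in>space M. \<exists>k::nat. \<forall>q\<in>D. lo + inverse (Suc k) \<le> S q \<omega> \<and> S q \<omega> \<le> hi - inverse (Suc k)}"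
    unfolding inside_event_def using continuous_on_strict_bounds_iff_dense[OF I S_cont D(2,3)]
    by (intro Collect_cong conj_cong refl) simp
  also have "\<dots> = (\<Union>k. G k)"
    unfolding G_def by auto
  finally have "inside_event M S lo hi I = (\<Union>k. G k)" .
  moreover have "G k \<in> sets M" for k
  proof (cases "D = {}")
    case False
    have [measurable]: "S q \<in> borel_measurable M" if "q \<in> D" for q
      using S_meas D(2) that by blast
    show ?thesis
      unfolding G_def by (intro sets.Int sets.top sets.countable_INT' D(1) False image_subsetI) measurable
  qed (simp add: G_def)
  ultimately show ?thesis by auto
qed

lemma inside_event_UN:
  "inside_event M S lo hi (\<Union>j\<in>J. I j) = space M \<inter> (\<Inter>j\<in>J. inside_event M S lo hi (I j))"
  unfolding inside_event_def by auto

lemma UN_consecutive_atLeastAtMost: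
  fixes T :: "nat \<Rightarrow> 'a::linorder"
  assumes "\<forall>i\<in>{1..n}. T (i - 1) \<le> T i" and "1 \<le> n"
  shows "(\<Union>i\<in>{1..n}. {T (i - 1)..T i}) = {T 0..T n}"
  using assms
proof (induction n)
  case (Suc m)
  show ?case
  proof (cases "m = 0")
    case False
    then have IH: "(\<Union>i\<in>{1..m}. {T (i - 1)..T i}) = {T 0..T m}"
      using Suc by auto
    have "T m \<in> (\<Union>i\<in>{1..m}. {T (i - 1)..T i})"
      using False Suc.prems(1) by (intro UN_I[of m]) auto
    then have "T 0 \<le> T m"
      unfolding IH by simp
    moreover have "T m \<le> T (Suc m)"
      using bspec[OF Suc.prems(1), of "Suc m"] by simp
    ultimately show ?thesis
      using IH ivl_disj_un_two_touch(4)[of "T 0" "T m" "T (Suc m)"]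
      by (simp add: atLeastAtMostSuc_conv Un_commute)
  qed simp
qed simp

lemma bs_price_measurable:
  assumes "std_BM M F W" and "0 \<le> u"
  shows "bs_price S0 r \<sigma> W u \<in> borel_measurable M"
proof -
  have "subalgebra M (F u)" and "W u \<in> borel_measurable (F u)"
    using assms unfolding std_BM_def by auto
  then have [measurable]: "W u \<in> borel_measurable M"
    by (rule measurable_from_subalg)
  show ?thesis
    unfolding bs_price_def by measurable
qed

lemma bs_price_continuous:
  assumes "std_BM M F W" and "\<omega> \<in> space M"
  shows "continuous_on {0..} (\<lambda>u. bs_price S0 r \<sigma> W u \<omega>)"
proof -
  have "continuous_on {0..} (\<lambda>u. W u \<omega>)"
    using assms unfolding std_BM_def by blast
  then show ?thesis
    unfolding bs_price_def by (intro continuous_intros)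
qed

lemma bs_inside_event_measurable:
  assumes "std_BM M F W" and "0 \<le> a"
  shows "inside_event M (bs_price S0 r \<sigma> W) lo hi {a..b} \<in> sets M"
  using assms
  by (intro inside_event_measurable bs_price_measurable continuous_on_subset[OF bs_price_continuous])
    auto

theorem theorem4p1:
  fixes M :: "'a measure" and F :: "real \<Rightarrow> 'a measure" and W :: "real \<Rightarrow> 'a \<Rightarrow> real"
    and S0 r \<sigma> :: real and n :: nat and T :: "nat \<Rightarrow> real" and P Blow Bup Fs t :: real
    and S :: "real \<Rightarrow> 'a \<Rightarrow> real" and C :: "nat \<Rightarrow> 'a \<Rightarrow> real" and A :: "'a \<Rightarrow> real"
  assumes BM: "std_BM M F W"
    and S0: "S0 > 0" and r: "r > 0" and sigma: "\<sigma> > 0"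
    and n: "n \<ge> 1"
    and T0: "0 < T 0" and P: "P > 0"
    and Tstep: "\<forall>i\<in>{1..n}. T i = T (i - 1) + P"
    and B: "0 < Blow" "Blow < Bup"
    and Fpos: "Fs > 0"
    and t: "0 \<le> t" "t < T 0"
  defines "S \<equiv> bs_price S0 r \<sigma> W"
    and "C \<equiv> \<lambda>i. indicator (inside_event M S Blow Bup {T (i - 1)..T i})"
    and "A \<equiv> \<lambda>\<omega>. \<Sum>i\<in>{1..n}. C i \<omega>"
  shows
    "(AE \<omega> in M. exp (- r * (T n - t)) * cexp M (F t) (\<lambda>\<omega>. max (Fs - A \<omega>) 0) \<omega>
        = exp (- r * (T n - t)) *
          (\<Sum>i\<in>{0..min n (nat \<lfloor>Fs\<rfloor>)}. (Fs - real i) * cprob M (F t) {\<omega>\<in>space M. A \<omega> = real i} \<omega>))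
   \<and> (AE \<omega> in M. cprob M (F t) {\<omega>\<in>space M. A \<omega> = real n} \<omega>
        = cprob M (F t) (inside_event M S Blow Bup {T 0..T n}) \<omega>)
   \<and> (AE \<omega> in M. \<forall>\<nu><n. cexp M (F t) (\<lambda>\<omega>. A \<omega> ^ \<nu>) \<omega>
        = (\<Sum>i\<in>{0..n}. real i ^ \<nu> * cprob M (F t) {\<omega>\<in>space M. A \<omega> = real i} \<omega>))
   \<and> (AE \<omega> in M. \<forall>q :: nat \<Rightarrow> real.
        (\<forall>\<nu><n. cexp M (F t) (\<lambda>\<omega>. A \<omega> ^ \<nu>) \<omega>
           = (\<Sum>i\<in>{0..<n}. real i ^ \<nu> * q i)
             + real n ^ \<nu> * cprob M (F t) {\<omega>\<in>space M. A \<omega> = real n} \<omega>)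
        \<longrightarrow> (\<forall>i<n. q i = cprob M (F t) {\<omega>\<in>space M. A \<omega> = real i} \<omega>))
   \<and> (AE \<omega> in M. \<forall>\<nu>\<in>{1..<n}. cexp M (F t) (\<lambda>\<omega>. A \<omega> ^ \<nu>) \<omega>
        = (\<Sum>J\<in>Pow {1..n}. real (coef_c n \<nu> J) *
             cprob M (F t) (inside_event M S Blow Bup (\<Union>j\<in>J. {T (j - 1)..T (j - 1) + P})) \<omega>))"
proof -
  interpret finite_measure_subalgebra M "F t"
    using BM by (intro finite_measure_subalgebraI) (auto simp: std_BM_def)
  define E where "E i = inside_event M S Blow Bup {T (i - 1)..T i}" for i
  have steps: "\<forall>i\<in>{1..n}. T (i - 1) \<le> T i"
    using Tstep P by auto
  have horizon: "(\<Union>i\<in>{1..n}. {T (i - 1)..T i}) = {T 0..T n}"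
    using UN_consecutive_atLeastAtMost[OF steps n] .
  have E_sets: "E i \<in> sets M" if "i \<in> {1..n}" for i
  proof -
    have "T (i - 1) \<in> {T 0..T n}"
      using that steps unfolding horizon[symmetric] by auto
    then show ?thesis
      unfolding E_def S_def using BM T0 by (intro bs_inside_event_measurable) auto
  qed
  have A_eq: "A = (\<lambda>\<omega>. \<Sum>i\<in>{1..n}. indicator (E i) \<omega>)"
    unfolding A_def C_def E_def ..
  have blocks: "inside_event M S Blow Bup (\<Union>j\<in>J. {T (j - 1)..T (j - 1) + P}) = space M \<inter> (\<Inter>j\<in>J. E j)"
    if "J \<subseteq> {1..n}" for J
    using that Tstep unfolding inside_event_UN E_def by (intro arg_cong2[of _ _ _ _ "(\<inter>)"] INF_cong) auto
  have law: "AE \<omega> in M. cexp M (F t) (\<lambda>\<omega>. g (A \<omega>)) \<omega>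
      = (\<Sum>i\<in>{0..n}. g (real i) * cprob M (F t) {\<omega>\<in>space M. A \<omega> = real i} \<omega>)" for g
    unfolding A_eq using E_sets by (rule real_cond_exp_fun_count)
  have "AE \<omega> in M. \<forall>\<nu>. cexp M (F t) (\<lambda>\<omega>. A \<omega> ^ \<nu>) \<omega>
      = (\<Sum>i\<in>{0..n}. real i ^ \<nu> * cprob M (F t) {\<omega>\<in>space M. A \<omega> = real i} \<omega>)"
    unfolding AE_all_countable by (intro allI law)
  then have moments: "AE \<omega> in M. \<forall>\<nu><n. cexp M (F t) (\<lambda>\<omega>. A \<omega> ^ \<nu>) \<omega>
      = (\<Sum>i\<in>{0..n}. real i ^ \<nu> * cprob M (F t) {\<omega>\<in>space M. A \<omega> = real i} \<omega>)"
    by eventually_elim simp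
  have "AE \<omega> in M. \<forall>\<nu>. cexp M (F t) (\<lambda>\<omega>. A \<omega> ^ \<nu>) \<omega>
      = (\<Sum>J\<in>Pow {1..n}. real (coef_c n \<nu> J) * cprob M (F t) (space M \<inter> (\<Inter>j\<in>J. E j)) \<omega>)"
    unfolding AE_all_countable A_eq using E_sets by (intro allI real_cond_exp_power_count)
  then have expansion: "AE \<omega> in M. \<forall>\<nu>\<in>{1..<n}. cexp M (F t) (\<lambda>\<omega>. A \<omega> ^ \<nu>) \<omega>
        = (\<Sum>J\<in>Pow {1..n}. real (coef_c n \<nu> J) *
             cprob M (F t) (inside_event M S Blow Bup (\<Union>j\<in>J. {T (j - 1)..T (j - 1) + P})) \<omega>)"
    by eventually_elim (auto simp: blocks[symmetric] intro!: sum.cong)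
  show ?thesis
  proof (intro conjI)
    show "AE \<omega> in M. exp (- r * (T n - t)) * cexp M (F t) (\<lambda>\<omega>. max (Fs - A \<omega>) 0) \<omega>
        = exp (- r * (T n - t)) *
          (\<Sum>i\<in>{0..min n (nat \<lfloor>Fs\<rfloor>)}. (Fs - real i) * cprob M (F t) {\<omega>\<in>space M. A \<omega> = real i} \<omega>)"
      using law[of "\<lambda>a. max (Fs - a) 0"] by eventually_elim (simp add: sum_put_payoff less_imp_le[OF Fpos])
    show "AE \<omega> in M. cprob M (F t) {\<omega>\<in>space M. A \<omega> = real n} \<omega>
        = cprob M (F t) (inside_event M S Blow Bup {T 0..T n}) \<omega>"
      unfolding A_eq horizon[symmetric] inside_event_UN E_def
      by (simp add: Collect_sum_indicator_eq_card[of "{1..n}", simplified])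
  qed (fact moments, use moments in \<open>eventually_elim\<close>, erule point_masses_unique_from_moments,
      fact expansion)
qed

end
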